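(* Let $X$ be a finite set and $A\subseteq X$ with $|A|$ even. \begin{enumerate} \item Let $(p_B)_{B\subseteq X}$ be nonnegative reals summing to $1$, $\tilde p_B=(p_B+p_{X\setminus B})/2$, $s_C=\sum_{B\in\mathcal{S}_C}p_B$ with $\mathcal{S}_C=\{B\subseteq X: C\cap B\neq\emptyset,\ C\cap(X\setminus B)\neq\emptyset\}$, and $\gamma_A=\sum_{B\subseteq X:\,|A\cap B|\text{ odd}}\tilde p_B$. Then \[ \gamma_A=\frac14\sum_{\substack{B\subseteq A\\|B|\text{ even}}}2^{|B|}\,\mathbb{E}_{|A|-|B|}\,s_B . \] \item Let $T$ be a phylogenetic tree with leaf set $X$ and nonnegative branch lengths, $\tilde w_B=w_{B|X\setminus B}/2$ where $w_{B|X\setminus B}$ is the length of the edge of $T$ whose deletion splits the leaves into $B$ and $X\setminus B$ (or $0$ if there is none), $\delta_C$ the sum of branch lengths of the smallest subtree of $T$ connecting $C$ ($0$ if $|C|\le1$), and $\mu_A=\sum_{B\subseteq X:\,|A\cap B|\text{ odd}}\tilde w_B$. Then \[ \mu_A=\frac14\sum_{\substack{B\subseteq A\\|B|\text{ even}}}2^{|B|}\,\mathbb{E}_{|A|-|B|}\,\delta_B . \] \end{enumerate}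
   Context: The Euler numbers $\mathbb{E}_k$ are defined by $\frac{1}{\cosh(x)}=\frac{2}{e^x+e^{-x}}=\sum_{k=0}^\infty \mathbb{E}_k\frac{x^k}{k!}$. $p_B$ is the probability that at a bi-allelic site exactly the taxa in $B$ have state $1$, and $s_C$ is the probability that a site is non-constant over $C$. A phylogenetic tree with leaf set $X$ is a tree whose leaves are bijectively labelled by $X$ and whose internal vertices have degree at least $3$. *)

theory Defs
  imports "HOL-Computational_Algebra.Formal_Power_Series"
begin

definition sech_fps :: "real fps" where
  "sech_fps = fps_const 2 * inverse (fps_exp 1 + fps_exp (-1))"

definition euler_number :: "nat \<Rightarrow> real" where
  "euler_number k = fact k * fps_nth sech_fps k"

definition ptilde :: "'a set \<Rightarrow> ('a set \<Rightarrow> real) \<Rightarrow> 'a set \<Rightarrow> real" where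
  "ptilde X p B = (p B + p (X - B)) / 2"

definition S_set :: "'a set \<Rightarrow> 'a set \<Rightarrow> 'a set set" where
  "S_set X C = {B. B \<subseteq> X \<and> C \<inter> B \<noteq> {} \<and> C \<inter> (X - B) \<noteq> {}}"

definition s_nonconst :: "'a set \<Rightarrow> ('a set \<Rightarrow> real) \<Rightarrow> 'a set \<Rightarrow> real" where
  "s_nonconst X p C = (\<Sum>B\<in>S_set X C. p B)"

definition gamma :: "'a set \<Rightarrow> ('a set \<Rightarrow> real) \<Rightarrow> 'a set \<Rightarrow> real" where
  "gamma X p A = (\<Sum>B\<in>{B. B \<subseteq> X \<and> odd (card (A \<inter> B))}. ptilde X p B)"

definition adj :: "'v set set \<Rightarrow> 'v \<Rightarrow> 'v \<Rightarrow> bool" where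
  "adj E u v \<longleftrightarrow> {u, v} \<in> E"

definition is_path :: "'v set set \<Rightarrow> 'v list \<Rightarrow> bool" where
  "is_path E xs \<longleftrightarrow> xs \<noteq> [] \<and> distinct xs \<and> (\<forall>i. Suc i < length xs \<longrightarrow> adj E (xs ! i) (xs ! Suc i))"

definition path_edges :: "'v list \<Rightarrow> 'v set set" where
  "path_edges xs = {{xs ! i, xs ! Suc i} | i. Suc i < length xs}"

definition is_cycle :: "'v set set \<Rightarrow> 'v list \<Rightarrow> bool" where
  "is_cycle E xs \<longleftrightarrow> length xs \<ge> 3 \<and> is_path E xs \<and> adj E (last xs) (hd xs)"

definition graph :: "'v set \<Rightarrow> 'v set set \<Rightarrow> bool" where
  "graph V E \<longleftrightarrow> finite V \<and> (\<forall>e\<in>E. \<exists>u v. e = {u, v} \<and> u \<noteq> v \<and> u \<in> V \<and> v \<in> V)"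

definition connected_graph :: "'v set \<Rightarrow> 'v set set \<Rightarrow> bool" where
  "connected_graph V E \<longleftrightarrow> (\<forall>u\<in>V. \<forall>v\<in>V. \<exists>xs. is_path E xs \<and> hd xs = u \<and> last xs = v)"

definition is_tree :: "'v set \<Rightarrow> 'v set set \<Rightarrow> bool" where
  "is_tree V E \<longleftrightarrow> graph V E \<and> V \<noteq> {} \<and> connected_graph V E \<and> \<not> (\<exists>xs. is_cycle E xs)"

definition degree :: "'v set set \<Rightarrow> 'v \<Rightarrow> nat" where
  "degree E v = card {e\<in>E. v \<in> e}"

definition phylo_tree :: "'a set \<Rightarrow> 'v set \<Rightarrow> 'v set set \<Rightarrow> ('a \<Rightarrow> 'v) \<Rightarrow> bool" where
  "phylo_tree X V E phi \<longleftrightarrow> is_tree V E \<and>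
     bij_betw phi X {v\<in>V. degree E v \<le> 1} \<and>
     (\<forall>v\<in>V. degree E v \<le> 1 \<or> degree E v \<ge> 3)"

definition split_side :: "'a set \<Rightarrow> 'v set set \<Rightarrow> ('a \<Rightarrow> 'v) \<Rightarrow> 'v set \<Rightarrow> 'v \<Rightarrow> 'a set" where
  "split_side X E phi e u = {x\<in>X. \<exists>xs. is_path (E - {e}) xs \<and> hd xs = u \<and> last xs = phi x}"

definition edge_induces :: "'a set \<Rightarrow> 'v set set \<Rightarrow> ('a \<Rightarrow> 'v) \<Rightarrow> 'v set \<Rightarrow> 'a set \<Rightarrow> bool" where
  "edge_induces X E phi e B \<longleftrightarrow> (\<exists>u\<in>e. split_side X E phi e u = B)"

text \<open>w_{B|X-B}: the length of the edge inducing the split B|X-B (0 if there is none); in a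
  phylogenetic tree there is at most one such edge, so we take the sum over all such edges.\<close>
definition split_weight :: "'a set \<Rightarrow> 'v set set \<Rightarrow> ('a \<Rightarrow> 'v) \<Rightarrow> ('v set \<Rightarrow> real) \<Rightarrow> 'a set \<Rightarrow> real" where
  "split_weight X E phi w B = (\<Sum>e\<in>{e\<in>E. edge_induces X E phi e B}. w e)"

definition wtilde :: "'a set \<Rightarrow> 'v set set \<Rightarrow> ('a \<Rightarrow> 'v) \<Rightarrow> ('v set \<Rightarrow> real) \<Rightarrow> 'a set \<Rightarrow> real" where
  "wtilde X E phi w B = split_weight X E phi w B / 2"

text \<open>Edges of the smallest subtree connecting the leaves labelled by C: the union of the paths
  between pairs of such leaves.\<close>
definition span_edges :: "'v set set \<Rightarrow> ('a \<Rightarrow> 'v) \<Rightarrow> 'a set \<Rightarrow> 'v set set" where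
  "span_edges E phi C = \<Union>{path_edges xs | xs x y. x \<in> C \<and> y \<in> C \<and> is_path E xs \<and> hd xs = phi x \<and> last xs = phi y}"

definition delta :: "'v set set \<Rightarrow> ('a \<Rightarrow> 'v) \<Rightarrow> ('v set \<Rightarrow> real) \<Rightarrow> 'a set \<Rightarrow> real" where
  "delta E phi w C = (if card C \<le> 1 then 0 else (\<Sum>e\<in>span_edges E phi C. w e))"

definition mu :: "'a set \<Rightarrow> 'v set set \<Rightarrow> ('a \<Rightarrow> 'v) \<Rightarrow> ('v set \<Rightarrow> real) \<Rightarrow> 'a set \<Rightarrow> real" where
  "mu X E phi w A = (\<Sum>B\<in>{B. B \<subseteq> X \<and> odd (card (A \<inter> B))}. wtilde X E phi w B)"

end

theory Submission
  imports Defs "HOL-Computational_Algebra.Polynomial"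
begin

text \<open>Both identities are linear in the weights of the splits D | X - D. A split contributes to
  gamma_A (resp. mu_A) iff |A \<inter> D| is odd, and to s_C (resp. delta_C) iff C meets both D and X - D;
  for trees this holds because the edges of the subtree spanned by C are exactly the edges whose
  split separates C. It therefore suffices to show, for D \<subseteq> A with |A| even, that the sum of
  2^|C| E_(|A|-|C|) over the even C \<subseteq> A meeting both D and A - D is 4 if |D| is odd and 0 otherwise.
  With the umbral evaluation L(x^k) = E_k, inclusion-exclusion writes this sum as
  L((x+2)^(a+b)) - L(x^b (x+2)^a) - L(x^a (x+2)^b) + E_(a+b), where a = |D| and b = |A - D|.
  Since sech(x) (e^x + e^-x) = 2, L satisfies L(p(x+1)) + L(p(x-1)) = 2 p(0) and is invariant
  under x \<mapsto> -x, which evaluates the four terms.\<close>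

section \<open>Umbral calculus for the Euler numbers\<close>

lemma euler_number_recurrence:
  "(\<Sum>i\<le>k. of_nat (k choose i) * euler_number i * (1 + (-1)^(k-i))) = (if k = 0 then 2 else 0)"
proof -
  define g :: "real fps" where "g = fps_exp 1 + fps_exp (-1)"
  have "sech_fps * g = fps_const 2 * (inverse g * g)"
    by (simp add: sech_fps_def g_def mult.assoc)
  also have "\<dots> = fps_const 2"
    using inverse_mult_eq_1[of g] by (simp add: g_def)
  finally have product: "fps_nth (sech_fps * g) k = (if k = 0 then 2 else 0)"
    by simp
  have "(\<Sum>i\<le>k. of_nat (k choose i) * euler_number i * (1 + (-1)^(k-i)))
      = (\<Sum>i\<le>k. fact k * (euler_number i / fact i * ((1 + (-1)^(k-i)) / fact (k - i))))"
    by (rule sum.cong) (simp_all add: binomial_fact field_simps)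
  also have "\<dots> = fact k * fps_nth (sech_fps * g) k"
    unfolding fps_mult_nth atLeast0AtMost sum_distrib_left
    by (rule sum.cong) (auto simp: euler_number_def g_def add_divide_distrib)
  finally show ?thesis
    using product by simp
qed

lemma euler_number_odd: "odd k \<Longrightarrow> euler_number k = 0"
proof (induction k rule: less_induct)
  case (less k)
  then obtain m where k: "k = Suc m"
    by (cases k) auto
  have "(\<Sum>i\<le>m. of_nat (k choose i) * euler_number i * (1 + (-1)^(k-i))) = 0"
  proof (intro sum.neutral ballI)
    fix i assume "i \<in> {..m}"
    then show "of_nat (k choose i) * euler_number i * (1 + (-1)^(k-i)) = 0"
    proof (cases "odd i")
      case True
      then show ?thesis using less.IH[of i] \<open>i \<in> {..m}\<close> k by auto
    next
      case False
      then have "odd (k - i)" using less.prems \<open>i \<in> {..m}\<close> k by auto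
      then show ?thesis by simp
    qed
  qed
  then show ?case
    using euler_number_recurrence[of k] k by (simp add: sum.atMost_Suc)
qed

definition euler_umbral :: "real poly \<Rightarrow> real" where
  "euler_umbral p = (\<Sum>i\<le>degree p. coeff p i * euler_number i)"

lemma euler_umbral_eq_sum:
  "degree p \<le> n \<Longrightarrow> euler_umbral p = (\<Sum>i\<le>n. coeff p i * euler_number i)"
  unfolding euler_umbral_def by (rule sum.mono_neutral_left) (auto simp: coeff_eq_0)

lemma euler_umbral_add: "euler_umbral (p + q) = euler_umbral p + euler_umbral q"
proof -
  let ?n = "max (degree p) (degree q)"
  have "degree (p + q) \<le> ?n"
    by (rule degree_add_le) auto
  then show ?thesis
    by (simp add: euler_umbral_eq_sum[of p ?n] euler_umbral_eq_sum[of q ?n]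
        euler_umbral_eq_sum[of "p + q" ?n] distrib_right sum.distrib)
qed

lemma euler_umbral_smult: "euler_umbral (smult c p) = c * euler_umbral p"
  by (simp add: euler_umbral_eq_sum[of "smult c p" "degree p"] euler_umbral_def
      sum_distrib_left mult.assoc)

lemma euler_umbral_uminus: "euler_umbral (- p) = - euler_umbral p"
  using euler_umbral_smult[of "-1" p] by simp

lemma euler_umbral_sum: "euler_umbral (sum f A) = (\<Sum>i\<in>A. euler_umbral (f i))"
  by (induction A rule: infinite_finite_induct) (simp_all add: euler_umbral_add euler_umbral_def[of 0])

lemma euler_umbral_linear_power:
  "euler_umbral ([:a, 1:] ^ n) = (\<Sum>i\<le>n. of_nat (n choose i) * a ^ (n - i) * euler_number i)"
  by (simp add: euler_umbral_eq_sum[OF degree_linear_power[THEN eq_imp_le]] coeff_linear_poly_power)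

lemma euler_umbral_monomial: "euler_umbral ([:0, 1:] ^ n) = euler_number n"
proof -
  have "euler_umbral ([:0, 1:] ^ n) = (\<Sum>i\<in>{n}. of_nat (n choose i) * 0 ^ (n - i) * euler_number i)"
    unfolding euler_umbral_linear_power by (rule sum.mono_neutral_right) auto
  then show ?thesis by simp
qed

lemma pcompose_monomial: "pcompose ([:0, 1:] ^ i) q = q ^ i"
  by (induction i) (auto simp: pcompose_mult pcompose_pCons pcompose_1)

lemma pcompose_power: "pcompose (p ^ i) q = pcompose p q ^ i"
  by (induction i) (auto simp: pcompose_mult pcompose_1)

lemma euler_umbral_pcompose:
  "euler_umbral (pcompose p q) = (\<Sum>i\<le>degree p. coeff p i * euler_umbral (q ^ i))"
proof -
  have "pcompose p q = pcompose (\<Sum>i\<le>degree p. monom (coeff p i) i) q"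
    by (simp add: poly_as_sum_of_monoms)
  also have "\<dots> = (\<Sum>i\<le>degree p. smult (coeff p i) (q ^ i))"
    by (simp add: pcompose_sum monom_altdef pcompose_smult pcompose_monomial)
  finally show ?thesis
    by (simp add: euler_umbral_sum euler_umbral_smult)
qed

lemma euler_umbral_shift:
  "euler_umbral (pcompose p [:1, 1:]) + euler_umbral (pcompose p [:-1, 1:]) = 2 * poly p 0"
proof -
  have power: "euler_umbral ([:1, 1:] ^ k) + euler_umbral ([:-1, 1:] ^ k) = 2 * 0 ^ k" for k
  proof -
    have "euler_umbral ([:1, 1:] ^ k) + euler_umbral ([:-1, 1:] ^ k) =
        (\<Sum>i\<le>k. of_nat (k choose i) * euler_number i * (1 + (-1)^(k-i)))"
      by (simp add: euler_umbral_linear_power sum.distrib[symmetric] algebra_simps)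
    then show ?thesis by (simp add: euler_number_recurrence)
  qed
  have "euler_umbral (pcompose p [:1, 1:]) + euler_umbral (pcompose p [:-1, 1:]) =
      (\<Sum>i\<le>degree p. coeff p i * (euler_umbral ([:1, 1:] ^ i) + euler_umbral ([:-1, 1:] ^ i)))"
    by (simp add: euler_umbral_pcompose sum.distrib[symmetric] algebra_simps)
  also have "\<dots> = 2 * coeff p 0"
    unfolding power by (simp add: power_0_left if_distrib[of "\<lambda>x. _ * x"] sum.delta cong: if_cong)
  finally show ?thesis
    by (simp add: poly_0_coeff_0)
qed

lemma euler_umbral_reflect: "euler_umbral (pcompose p [:0, -1:]) = euler_umbral p"
proof -
  have power: "euler_umbral ([:0, -1:] ^ k) = euler_umbral ([:0, 1:] ^ k)" for k
  proof -
    have "[:0, -1:] ^ k = smult (-1) [:0, 1::real:] ^ k"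
      by simp
    then have "[:0, -1:] ^ k = smult ((-1) ^ k) ([:0, 1::real:] ^ k)"
      by (simp only: smult_power)
    then show ?thesis
      by (cases "even k") (simp_all add: euler_umbral_uminus euler_umbral_monomial euler_number_odd)
  qed
  show ?thesis
    using euler_umbral_pcompose[of p "[:0, 1:]"] by (simp add: euler_umbral_pcompose power)
qed

lemma euler_umbral_shift2:
  "euler_umbral (pcompose q [:2, 1:]) + euler_umbral q = 2 * poly q 1"
proof -
  define p where "p = pcompose q [:1, 1:]"
  have "pcompose p [:1, 1:] = pcompose q [:2, 1:]" and "pcompose p [:-1, 1:] = q"
    by (simp_all add: p_def pcompose_assoc[symmetric] pcompose_pCons)
  moreover have "poly p 0 = poly q 1"
    by (simp add: p_def poly_pcompose)
  ultimately show ?thesis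
    using euler_umbral_shift[of p] by simp
qed

section \<open>Sums over splits\<close>

lemma euler_umbral_split_identity:
  assumes "even (a + b)"
  shows "euler_umbral ([:2, 1:] ^ (a + b)) - euler_umbral ([:0, 1:] ^ b * [:2, 1:] ^ a)
      - euler_umbral ([:0, 1:] ^ a * [:2, 1:] ^ b) + euler_number (a + b) = 4 * of_bool (odd a)"
proof -
  have whole: "euler_umbral ([:2, 1:] ^ (a + b)) + euler_number (a + b) = 2"
    using euler_umbral_shift2[of "[:0, 1:] ^ (a + b)"]
    by (simp add: pcompose_monomial euler_umbral_monomial)
  text \<open>Reflection \<open>x \<mapsto> -x\<close> turns \<open>x\<^sup>a (x - 2)\<^sup>b\<close> into \<open>x\<^sup>a (x + 2)\<^sup>b\<close> since \<open>a + b\<close> is even.\<close>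
  define q where "q = [:0, 1::real:] ^ a * [:-2, 1:] ^ b"
  have "pcompose q [:0, -1:] = [:0, -1:] ^ a * [:-2, -1:] ^ b"
    by (simp add: q_def pcompose_mult pcompose_monomial pcompose_power pcompose_pCons)
  also have "\<dots> = smult ((-1) ^ a) ([:0, 1:] ^ a) * smult ((-1) ^ b) ([:2, 1:] ^ b)"
  proof -
    have "[:0, -1:] = smult (-1) [:0, 1::real:]" "[:-2, -1:] = smult (-1) [:2, 1::real:]"
      by simp_all
    then show ?thesis by (simp only: smult_power)
  qed
  also have "\<dots> = [:0, 1:] ^ a * [:2, 1:] ^ b"
    using assms by (simp add: power_add[symmetric] mult_ac)
  finally have reflected: "euler_umbral q = euler_umbral ([:0, 1:] ^ a * [:2, 1:] ^ b)"
    using euler_umbral_reflect[of q] by simp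
  have shifted: "pcompose q [:2, 1:] = [:0, 1:] ^ b * [:2, 1:] ^ a"
    by (simp add: q_def pcompose_mult pcompose_monomial pcompose_power pcompose_pCons mult.commute)
  have "euler_umbral ([:0, 1:] ^ b * [:2, 1:] ^ a) + euler_umbral ([:0, 1:] ^ a * [:2, 1:] ^ b)
      = 2 * (-1) ^ b"
    using euler_umbral_shift2[of q] shifted reflected by (simp add: q_def)
  moreover have "(-1::real) ^ b = (-1) ^ a"
    using assms by (metis even_add neg_one_even_power neg_one_odd_power)
  ultimately show ?thesis
    using whole by (cases "even a") auto
qed

lemma sum_Pow_euler_number_eq_umbral:
  assumes "finite S"
  shows "(\<Sum>C\<in>Pow S. 2 ^ card C * euler_number (m + card S - card C))
       = euler_umbral ([:0, 1:] ^ m * [:2, 1:] ^ card S)"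
proof -
  have "[:2, 1:] ^ card S = (\<Prod>i\<in>S. [:2:] + [:0, 1::real:])"
    by simp
  also have "\<dots> = (\<Sum>C\<in>Pow S. (\<Prod>i\<in>C. [:2:]) * (\<Prod>i\<in>S - C. [:0, 1:]))"
    by (rule prod_add[OF assms])
  finally have binomial: "[:2, 1:] ^ card S = (\<Sum>C\<in>Pow S. [:2 ^ card C:] * [:0, 1::real:] ^ card (S - C))"
    by (simp add: poly_const_pow)
  have "[:0, 1:] ^ m * [:2, 1:] ^ card S
      = (\<Sum>C\<in>Pow S. smult (2 ^ card C) ([:0, 1::real:] ^ (m + card S - card C)))"
    unfolding binomial sum_distrib_left
  proof (rule sum.cong)
    fix C assume "C \<in> Pow S"
    then have "m + card S - card C = m + card (S - C)"
      using assms by (auto simp: card_Diff_subset finite_subset card_mono)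
    then show "[:0, 1:] ^ m * ([:2 ^ card C:] * [:0, 1::real:] ^ card (S - C)) =
        smult (2 ^ card C) ([:0, 1::real:] ^ (m + card S - card C))"
      by (simp add: power_add mult_ac)
  qed simp
  then show ?thesis
    by (simp add: euler_umbral_sum euler_umbral_smult euler_umbral_monomial)
qed

lemma euler_sum_splitting_indicator:
  assumes fin: "finite A" and even_A: "even (card A)" and "D \<subseteq> A"
  shows "(\<Sum>C\<in>{C. C \<subseteq> A \<and> even (card C)}. 2 ^ card C * euler_number (card A - card C) *
            of_bool (C \<inter> D \<noteq> {} \<and> C \<inter> (A - D) \<noteq> {})) = 4 * of_bool (odd (card D))"
proof -
  define f where "f C = (2::real) ^ card C * euler_number (card A - card C)" for C :: "'a set"
  text \<open>Odd subsets contribute nothing, as \<open>card A - card C\<close> is then odd.\<close>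
  have all_subsets: "(\<Sum>C\<in>{C. C \<subseteq> A \<and> even (card C)}. f C * of_bool (P C))
      = (\<Sum>C\<in>Pow A. f C * of_bool (P C))" for P
  proof (rule sum.mono_neutral_left)
    show "\<forall>C\<in>Pow A - {C. C \<subseteq> A \<and> even (card C)}. f C * of_bool (P C) = 0"
    proof
      fix C assume "C \<in> Pow A - {C. C \<subseteq> A \<and> even (card C)}"
      then have "odd (card A - card C)"
        using fin even_A card_mono[of A C] by auto
      then show "f C * of_bool (P C) = 0"
        by (simp add: f_def euler_number_odd)
    qed
  qed (use fin in auto)
  have subsets: "(\<Sum>C\<in>Pow A. f C * of_bool (C \<subseteq> S)) = (\<Sum>C\<in>Pow S. f C)" if "S \<subseteq> A" for S
    using that by (intro sum.mono_neutral_cong_right) (auto simp: fin)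
  have card_A: "card A = card D + card (A - D)"
    using assms by (simp add: card_Diff_subset finite_subset card_mono)
  have inclusion_exclusion: "f C * of_bool (C \<inter> D \<noteq> {} \<and> C \<inter> (A - D) \<noteq> {}) =
      f C - f C * of_bool (C \<subseteq> A - D) - f C * of_bool (C \<subseteq> D) + f C * of_bool (C \<subseteq> {})"
    if "C \<in> Pow A" for C
    using that by auto
  have "(\<Sum>C\<in>Pow A. f C * of_bool (C \<inter> D \<noteq> {} \<and> C \<inter> (A - D) \<noteq> {}))
      = (\<Sum>C\<in>Pow A. f C - f C * of_bool (C \<subseteq> A - D) - f C * of_bool (C \<subseteq> D)
          + f C * of_bool (C \<subseteq> {}))"
    by (rule sum.cong[OF refl inclusion_exclusion])
  also have "\<dots> = (\<Sum>C\<in>Pow A. f C) - (\<Sum>C\<in>Pow A. f C * of_bool (C \<subseteq> A - D))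
        - (\<Sum>C\<in>Pow A. f C * of_bool (C \<subseteq> D)) + (\<Sum>C\<in>Pow A. f C * of_bool (C \<subseteq> {}))"
    by (simp only: sum.distrib sum_subtractf)
  also have "\<dots> = (\<Sum>C\<in>Pow A. f C) - (\<Sum>C\<in>Pow (A - D). f C) - (\<Sum>C\<in>Pow D. f C)
        + (\<Sum>C\<in>Pow {}. f C)"
    by (simp only: subsets Diff_subset \<open>D \<subseteq> A\<close> empty_subsetI)
  also have "\<dots> = euler_umbral ([:2, 1:] ^ (card D + card (A - D)))
      - euler_umbral ([:0, 1:] ^ card (A - D) * [:2, 1:] ^ card D)
      - euler_umbral ([:0, 1:] ^ card D * [:2, 1:] ^ card (A - D)) + euler_number (card D + card (A - D))"
    using sum_Pow_euler_number_eq_umbral[OF fin, of 0]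
      sum_Pow_euler_number_eq_umbral[of "A - D" "card D"]
      sum_Pow_euler_number_eq_umbral[of D "card (A - D)"]
    using assms finite_subset[OF _ fin] by (simp add: f_def card_A add.commute)
  also have "\<dots> = 4 * of_bool (odd (card D))"
    using euler_umbral_split_identity[of "card D" "card (A - D)"] even_A card_A by simp
  finally show ?thesis
    using all_subsets by (simp only: f_def)
qed

lemma euler_sum_splitting_weights:
  fixes D :: "'i \<Rightarrow> 'a set" and g :: "'i \<Rightarrow> real"
  assumes "finite A" "A \<subseteq> X" "even (card A)" "finite I"
  shows "(\<Sum>C\<in>{C. C \<subseteq> A \<and> even (card C)}. 2 ^ card C * euler_number (card A - card C) *
            (\<Sum>i\<in>{i\<in>I. C \<inter> D i \<noteq> {} \<and> C \<inter> (X - D i) \<noteq> {}}. g i))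
       = 4 * (\<Sum>i\<in>{i\<in>I. odd (card (A \<inter> D i))}. g i)"
proof -
  let ?K = "{C. C \<subseteq> A \<and> even (card C)}"
  let ?c = "\<lambda>C. 2 ^ card C * euler_number (card A - card C)"
  let ?splits = "\<lambda>C i. C \<inter> (A \<inter> D i) \<noteq> {} \<and> C \<inter> (A - A \<inter> D i) \<noteq> {}"
  have "(\<Sum>i\<in>{i\<in>I. C \<inter> D i \<noteq> {} \<and> C \<inter> (X - D i) \<noteq> {}}. g i)
      = (\<Sum>i\<in>I. g i * of_bool (?splits C i))" if "C \<in> ?K" for C
  proof -
    have "?splits C i \<longleftrightarrow> C \<inter> D i \<noteq> {} \<and> C \<inter> (X - D i) \<noteq> {}" for i
      using that assms(2) by blast
    then show ?thesis
      using \<open>finite I\<close> by (simp add: sum.inter_restrict Int_def)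
  qed
  then have "(\<Sum>C\<in>?K. ?c C * (\<Sum>i\<in>{i\<in>I. C \<inter> D i \<noteq> {} \<and> C \<inter> (X - D i) \<noteq> {}}. g i))
      = (\<Sum>C\<in>?K. ?c C * (\<Sum>i\<in>I. g i * of_bool (?splits C i)))"
    by (intro sum.cong refl) (simp only:)
  also have "\<dots> = (\<Sum>i\<in>I. g i * (\<Sum>C\<in>?K. ?c C * of_bool (?splits C i)))"
    unfolding sum_distrib_left
    by (subst sum.swap) (intro sum.cong refl mult.left_commute)
  also have "\<dots> = (\<Sum>i\<in>I. g i * (4 * of_bool (odd (card (A \<inter> D i)))))"
    using euler_sum_splitting_indicator[OF assms(1,3)] by (simp del: of_bool_eq)
  also have "\<dots> = 4 * (\<Sum>i\<in>I. g i * of_bool (odd (card (A \<inter> D i))))"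
    by (simp add: sum_distrib_left mult_ac del: sum_mult_of_bool_eq)
  also have "\<dots> = 4 * (\<Sum>i\<in>{i\<in>I. odd (card (A \<inter> D i))}. g i)"
    using \<open>finite I\<close> by (simp add: Collect_conj_eq)
  finally show ?thesis .
qed

section \<open>Site pattern probabilities\<close>

lemma odd_card_Int_complement:
  assumes "finite A" "A \<subseteq> X" "even (card A)"
  shows "odd (card (A \<inter> (X - B))) \<longleftrightarrow> odd (card (A \<inter> B))"
proof -
  have "A \<inter> (X - B) = A - A \<inter> B"
    using assms(2) by blast
  then have "card (A \<inter> (X - B)) = card A - card (A \<inter> B)"
    using assms(1) by (simp add: card_Diff_subset)
  moreover have "card (A \<inter> B) \<le> card A"
    using assms(1) by (simp add: card_mono)
  ultimately show ?thesis
    using assms(3) by auto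
qed

lemma gamma_eq_sum_odd:
  assumes "finite A" "A \<subseteq> X" "even (card A)"
  shows "gamma X p A = (\<Sum>B\<in>{B\<in>Pow X. odd (card (A \<inter> B))}. p B)"
proof -
  let ?O = "{B. B \<subseteq> X \<and> odd (card (A \<inter> B))}"
  have "(\<Sum>B\<in>?O. p (X - B)) = (\<Sum>B\<in>?O. p B)"
    by (rule sum.reindex_bij_witness[of _ "\<lambda>B. X - B" "\<lambda>B. X - B"])
      (auto simp: odd_card_Int_complement[OF assms])
  then show ?thesis
    by (simp add: gamma_def ptilde_def sum_divide_distrib[symmetric] sum.distrib)
qed

lemma gamma_formula:
  assumes "finite X" "A \<subseteq> X" "even (card A)"
  shows "gamma X p A = 1/4 * (\<Sum>B\<in>{B. B \<subseteq> A \<and> even (card B)}.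
           2 ^ card B * euler_number (card A - card B) * s_nonconst X p B)"
proof -
  have finite_A: "finite A"
    using assms(1,2) by (rule finite_subset[rotated])
  have "s_nonconst X p C = (\<Sum>B\<in>{B\<in>Pow X. C \<inter> B \<noteq> {} \<and> C \<inter> (X - B) \<noteq> {}}. p B)" for C
    by (simp add: s_nonconst_def S_set_def)
  then show ?thesis
    using euler_sum_splitting_weights[OF finite_A assms(2,3), where I = "Pow X" and D = "\<lambda>B. B" and g = p]
      gamma_eq_sum_odd[OF finite_A assms(2,3)] assms(1)
    by simp
qed

section \<open>Splits induced by tree edges\<close>

lemma symp_adj: "symp (adj F)"
  by (auto simp: symp_def adj_def insert_commute)

lemma adj_rtranclp_sym: "(adj F)\<^sup>*\<^sup>* a b \<Longrightarrow> (adj F)\<^sup>*\<^sup>* b a"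
  using symp_rtranclp[OF symp_adj] by (rule sympD)

lemma adj_chain_rtranclp:
  assumes "\<And>j. m \<le> j \<Longrightarrow> j < k \<Longrightarrow> adj F (xs ! j) (xs ! Suc j)" and "m \<le> k"
  shows "(adj F)\<^sup>*\<^sup>* (xs ! m) (xs ! k)"
  using assms by (induction k) (auto simp: le_Suc_eq intro: rtranclp.rtrancl_into_rtrancl)

lemma path_imp_rtranclp: "is_path F xs \<Longrightarrow> (adj F)\<^sup>*\<^sup>* (hd xs) (last xs)"
  using adj_chain_rtranclp[of 0 "length xs - 1" F xs]
  by (auto simp: is_path_def hd_conv_nth last_conv_nth)

lemma rtranclp_imp_path:
  assumes "(adj F)\<^sup>*\<^sup>* a b"
  shows "\<exists>xs. is_path F xs \<and> hd xs = a \<and> last xs = b"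
  using assms
proof (induction rule: rtranclp_induct)
  case base
  have "is_path F [a]"
    by (simp add: is_path_def)
  then show ?case by force
next
  case (step b c)
  then obtain xs where xs: "is_path F xs" "hd xs = a" "last xs = b"
    by blast
  then have "xs \<noteq> []"
    by (simp add: is_path_def)
  show ?case
  proof (cases "c \<in> set xs")
    case True
    then obtain k where k: "k < length xs" "xs ! k = c"
      by (auto simp: in_set_conv_nth)
    have "is_path F (take (Suc k) xs)"
      using xs(1) k by (auto simp: is_path_def)
    moreover have "hd (take (Suc k) xs) = a" and "last (take (Suc k) xs) = c"
      using xs(2) k \<open>xs \<noteq> []\<close> by (simp_all add: last_conv_nth)
    ultimately show ?thesis
      by blast
  next
    case False
    have "adj F ((xs @ [c]) ! i) ((xs @ [c]) ! Suc i)" if "Suc i < length (xs @ [c])" for i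
    proof (cases "Suc i < length xs")
      case True
      then show ?thesis using xs(1) by (simp add: is_path_def nth_append)
    next
      case False
      then have "i = length xs - 1"
        using that by simp
      then show ?thesis
        using xs(3) \<open>xs \<noteq> []\<close> step(2) by (auto simp: nth_append last_conv_nth)
    qed
    then have "is_path F (xs @ [c])"
      using xs(1) False by (auto simp: is_path_def)
    then show ?thesis
      using xs(2) \<open>xs \<noteq> []\<close> by force
  qed
qed

lemma path_between_iff_rtranclp:
  "(\<exists>xs. is_path F xs \<and> hd xs = a \<and> last xs = b) \<longleftrightarrow> (adj F)\<^sup>*\<^sup>* a b"
  using path_imp_rtranclp rtranclp_imp_path by metis

lemma path_avoiding_edge: "is_path E xs \<Longrightarrow> e \<notin> path_edges xs \<Longrightarrow> is_path (E - {e}) xs"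
  by (auto simp: is_path_def adj_def path_edges_def)

lemma tree_edge_removal_disconnects:
  assumes tree: "is_tree V E" and "{u, v} \<in> E" "u \<noteq> v"
  shows "\<not> (adj (E - {{u, v}}))\<^sup>*\<^sup>* u v"
proof
  assume "(adj (E - {{u, v}}))\<^sup>*\<^sup>* u v"
  then obtain xs where xs: "is_path (E - {{u, v}}) xs" "hd xs = u" "last xs = v"
    using rtranclp_imp_path by metis
  text \<open>Closing this path with the edge \<open>{u, v}\<close> gives a cycle.\<close>
  have "length xs \<noteq> 0" "length xs \<noteq> 1"
    using xs \<open>u \<noteq> v\<close> by (auto simp: is_path_def hd_conv_nth last_conv_nth)
  moreover have "length xs \<noteq> 2"
  proof
    assume "length xs = 2"
    then have "adj (E - {{u, v}}) (xs ! 0) (xs ! 1)" and "xs ! 0 = u" and "xs ! 1 = v"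
      using xs by (auto simp: is_path_def hd_conv_nth last_conv_nth)
    then show False
      by (simp add: adj_def)
  qed
  ultimately have "length xs \<ge> 3"
    by linarith
  moreover have "is_path E xs"
    using xs(1) by (auto simp: is_path_def adj_def)
  moreover have "adj E (last xs) (hd xs)"
    using assms(2) xs(2,3) by (simp add: adj_def insert_commute)
  ultimately have "is_cycle E xs"
    by (simp add: is_cycle_def)
  then show False
    using tree by (auto simp: is_tree_def)
qed

lemma edge_removal_reaches_endpoint:
  assumes "connected_graph V E" "a \<in> V" "u \<in> V"
  shows "(adj (E - {{u, v}}))\<^sup>*\<^sup>* a u \<or> (adj (E - {{u, v}}))\<^sup>*\<^sup>* a v"
proof -
  have "(adj E)\<^sup>*\<^sup>* a u"
    using assms by (auto simp: connected_graph_def path_between_iff_rtranclp)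
  then show ?thesis
  proof (induction rule: converse_rtranclp_induct)
    case (step a b)
    show ?case
    proof (cases "{a, b} = {u, v}")
      case True
      then show ?thesis by (auto simp: doubleton_eq_iff)
    next
      case False
      then have "adj (E - {{u, v}}) a b"
        using step(1) by (simp add: adj_def)
      with step(3) show ?thesis
        by (meson converse_rtranclp_into_rtranclp)
    qed
  qed simp
qed

lemma path_crossing_edge:
  assumes path: "is_path E xs" and crossed: "{u, v} \<in> path_edges xs"
  defines "R \<equiv> (adj (E - {{u, v}}))\<^sup>*\<^sup>*"
  shows "(R (hd xs) u \<and> R (last xs) v) \<or> (R (hd xs) v \<and> R (last xs) u)"
proof -
  obtain i where i: "Suc i < length xs" "{u, v} = {xs ! i, xs ! Suc i}"
    using crossed by (auto simp: path_edges_def)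
  have distinct: "distinct xs" and "xs \<noteq> []"
    using path by (auto simp: is_path_def)
  have other_steps: "adj (E - {{u, v}}) (xs ! j) (xs ! Suc j)" if "Suc j < length xs" "j \<noteq> i" for j
  proof -
    have "{xs ! j, xs ! Suc j} \<noteq> {xs ! i, xs ! Suc i}"
      using that i distinct by (auto simp: doubleton_eq_iff nth_eq_iff_index_eq)
    then show ?thesis
      using path that i(2) by (simp add: is_path_def adj_def)
  qed
  have "R (xs ! 0) (xs ! i)"
    unfolding R_def by (rule adj_chain_rtranclp) (use other_steps i in auto)
  moreover have "R (xs ! Suc i) (xs ! (length xs - 1))"
    unfolding R_def by (rule adj_chain_rtranclp) (use other_steps i in auto)
  then have "R (xs ! (length xs - 1)) (xs ! Suc i)"
    unfolding R_def by (rule adj_rtranclp_sym)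
  moreover have "(xs ! i = u \<and> xs ! Suc i = v) \<or> (xs ! i = v \<and> xs ! Suc i = u)"
    using i(2) by (auto simp: doubleton_eq_iff)
  ultimately show ?thesis
    using \<open>xs \<noteq> []\<close> by (auto simp: hd_conv_nth last_conv_nth)
qed

lemma split_side_eq_reachable:
  "split_side X E phi e u = {x\<in>X. (adj (E - {e}))\<^sup>*\<^sup>* u (phi x)}"
  by (simp add: split_side_def path_between_iff_rtranclp)

lemma tree_edge_endpoints_in_vertices:
  assumes "is_tree V E" "{u, v} \<in> E"
  shows "u \<in> V" "v \<in> V"
  using assms by (auto simp: is_tree_def graph_def doubleton_eq_iff)

lemma tree_split_sides_complementary:
  assumes tree: "is_tree V E" and leaves: "phi ` X \<subseteq> V" and edge: "{u, v} \<in> E" "u \<noteq> v"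
  shows "split_side X E phi {u, v} v = X - split_side X E phi {u, v} u"
proof -
  define R where "R = (adj (E - {{u, v}}))\<^sup>*\<^sup>*"
  have separated: "\<not> R u v"
    unfolding R_def by (rule tree_edge_removal_disconnects[OF tree edge])
  have sym: "R a b \<Longrightarrow> R b a" for a b
    unfolding R_def by (rule adj_rtranclp_sym)
  have "R v a \<longleftrightarrow> \<not> R u a" if "a \<in> V" for a
  proof
    assume "R v a"
    then have "R a v"
      by (rule sym)
    then show "\<not> R u a"
      using separated rtranclp_trans[of _ u a v] unfolding R_def by blast
  next
    assume "\<not> R u a"
    moreover have "connected_graph V E"
      using tree by (simp add: is_tree_def)
    then have "R a u \<or> R a v"
      unfolding R_def
      by (rule edge_removal_reaches_endpoint[OF _ that tree_edge_endpoints_in_vertices(1)[OF tree edge(1)]])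
    ultimately show "R v a"
      using sym by blast
  qed
  then show ?thesis
    using leaves by (auto simp: split_side_eq_reachable R_def)
qed

lemma tree_edge_in_span_edges_iff:
  assumes tree: "is_tree V E" and leaves: "phi ` X \<subseteq> V" and edge: "{u, v} \<in> E" "u \<noteq> v"
    and "C \<subseteq> X"
  shows "{u, v} \<in> span_edges E phi C \<longleftrightarrow>
    C \<inter> split_side X E phi {u, v} u \<noteq> {} \<and> C \<inter> (X - split_side X E phi {u, v} u) \<noteq> {}"
proof -
  define R where "R = (adj (E - {{u, v}}))\<^sup>*\<^sup>*"
  define S where "S w = split_side X E phi {u, v} w" for w
  have side: "S w = {x\<in>X. R w (phi x)}" for w
    by (simp add: S_def R_def split_side_eq_reachable)
  have other_side: "S v = X - S u"
    unfolding S_def by (rule tree_split_sides_complementary[OF tree leaves edge])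
  have sym: "R a b \<Longrightarrow> R b a" for a b
    unfolding R_def by (rule adj_rtranclp_sym)
  show ?thesis
    unfolding S_def[symmetric]
  proof
    assume "{u, v} \<in> span_edges E phi C"
    then obtain xs x y where "x \<in> C" "y \<in> C" and path: "is_path E xs" "hd xs = phi x" "last xs = phi y"
      and "{u, v} \<in> path_edges xs"
      unfolding span_edges_def by blast
    then have "(R (phi x) u \<and> R (phi y) v) \<or> (R (phi x) v \<and> R (phi y) u)"
      using path_crossing_edge[OF path(1)] path(2,3) unfolding R_def by simp
    then have "(x \<in> S u \<and> y \<in> S v) \<or> (x \<in> S v \<and> y \<in> S u)"
      using \<open>x \<in> C\<close> \<open>y \<in> C\<close> \<open>C \<subseteq> X\<close> by (auto simp: side intro: sym)
    then show "C \<inter> S u \<noteq> {} \<and> C \<inter> (X - S u) \<noteq> {}"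
      using \<open>x \<in> C\<close> \<open>y \<in> C\<close> other_side by blast
  next
    assume "C \<inter> S u \<noteq> {} \<and> C \<inter> (X - S u) \<noteq> {}"
    then obtain x y where "x \<in> C" "x \<in> S u" "y \<in> C" "y \<in> S v"
      using other_side by blast
    then have x: "R u (phi x)" and y: "R v (phi y)"
      by (simp_all add: side)
    have "phi x \<in> V" "phi y \<in> V"
      using \<open>x \<in> C\<close> \<open>y \<in> C\<close> \<open>C \<subseteq> X\<close> leaves by auto
    moreover have "connected_graph V E"
      using tree by (simp add: is_tree_def)
    ultimately obtain xs where path: "is_path E xs" "hd xs = phi x" "last xs = phi y"
      unfolding connected_graph_def by blast
    have "{u, v} \<in> path_edges xs"
    proof (rule ccontr)
      assume "{u, v} \<notin> path_edges xs"
      then have "R (phi x) (phi y)"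
        using path_imp_rtranclp[OF path_avoiding_edge[OF path(1)]] path(2,3) unfolding R_def by simp
      moreover have "R (phi y) v"
        using y by (rule sym)
      ultimately have "R u v"
        using x unfolding R_def by (meson rtranclp_trans)
      then show False
        using tree_edge_removal_disconnects[OF tree edge] unfolding R_def by blast
    qed
    then show "{u, v} \<in> span_edges E phi C"
      unfolding span_edges_def using \<open>x \<in> C\<close> \<open>y \<in> C\<close> path by blast
  qed
qed

text \<open>One side of the split induced by \<open>e\<close>; choosing the other endpoint of \<open>e\<close> would give the
  complementary side (\<open>tree_split_sides_complementary\<close>).\<close>

definition edge_split :: "'a set \<Rightarrow> 'v set set \<Rightarrow> ('a \<Rightarrow> 'v) \<Rightarrow> 'v set \<Rightarrow> 'a set" where
  "edge_split X E phi e = split_side X E phi e (SOME u. u \<in> e)"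

lemma graph_edge_chosen_endpoint:
  assumes "graph V E" "e \<in> E"
  obtains v where "e = {SOME u. u \<in> e, v}" "(SOME u. u \<in> e) \<noteq> v"
proof -
  define u where "u = (SOME u. u \<in> e)"
  obtain a b where e: "e = {a, b}" "a \<noteq> b"
    using assms by (auto simp: graph_def)
  then have "u \<in> e"
    unfolding u_def by (metis insertI1 someI)
  then obtain v where "e = {u, v}" "u \<noteq> v"
    using e by auto
  then show thesis
    using that unfolding u_def by blast
qed

lemma tree_edge_split:
  assumes tree: "is_tree V E" and "e \<in> E"
  obtains u v where "e = {u, v}" "u \<noteq> v" "edge_split X E phi e = split_side X E phi e u"
proof -
  have "graph V E"
    using tree by (simp add: is_tree_def)
  then obtain v where "e = {SOME u. u \<in> e, v}" "(SOME u. u \<in> e) \<noteq> v"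
    using graph_edge_chosen_endpoint \<open>e \<in> E\<close> by blast
  then show thesis
    by (rule that) (simp add: edge_split_def)
qed

lemma tree_edge_induces_iff:
  assumes tree: "is_tree V E" and leaves: "phi ` X \<subseteq> V" and "e \<in> E"
  shows "edge_induces X E phi e B \<longleftrightarrow> B = edge_split X E phi e \<or> B = X - edge_split X E phi e"
proof -
  obtain u v where e: "e = {u, v}" "u \<noteq> v" and split: "edge_split X E phi e = split_side X E phi e u"
    using tree_edge_split[OF tree \<open>e \<in> E\<close>] .
  have "{u, v} \<in> E"
    using \<open>e \<in> E\<close> e(1) by simp
  then have "split_side X E phi {u, v} v = X - split_side X E phi {u, v} u"
    by (rule tree_split_sides_complementary[OF tree leaves _ e(2)])
  then show ?thesis
    unfolding edge_induces_def split unfolding e(1) by auto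
qed

lemma tree_edge_in_span_edges_iff_edge_split:
  assumes tree: "is_tree V E" and leaves: "phi ` X \<subseteq> V" and "e \<in> E" and "C \<subseteq> X"
  shows "e \<in> span_edges E phi C \<longleftrightarrow>
    C \<inter> edge_split X E phi e \<noteq> {} \<and> C \<inter> (X - edge_split X E phi e) \<noteq> {}"
proof -
  obtain u v where e: "e = {u, v}" "u \<noteq> v" and split: "edge_split X E phi e = split_side X E phi e u"
    using tree_edge_split[OF tree \<open>e \<in> E\<close>] .
  have "{u, v} \<in> E"
    using \<open>e \<in> E\<close> e(1) by simp
  then show ?thesis
    unfolding split unfolding e(1) by (rule tree_edge_in_span_edges_iff[OF tree leaves _ e(2) \<open>C \<subseteq> X\<close>])
qed

lemma tree_finite_edges:
  assumes "is_tree V E"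
  shows "finite E"
proof -
  have "E \<subseteq> Pow V" and "finite V"
    using assms by (auto simp: is_tree_def graph_def)
  then show ?thesis
    by (simp add: finite_subset)
qed

text \<open>The junk value \<open>card C = 0\<close> for infinite \<open>C\<close> is excluded by \<open>finite X\<close>.\<close>

lemma delta_eq_sum_splitting_edges:
  assumes tree: "is_tree V E" and leaves: "phi ` X \<subseteq> V" and "finite X" "C \<subseteq> X"
  shows "delta E phi w C = (\<Sum>e\<in>{e\<in>E. C \<inter> edge_split X E phi e \<noteq> {} \<and>
                                        C \<inter> (X - edge_split X E phi e) \<noteq> {}}. w e)"
proof (cases "card C \<le> 1")
  case True
  then have "\<forall>a\<in>C. \<forall>b\<in>C. a = b"
    using \<open>finite X\<close> \<open>C \<subseteq> X\<close> by (simp add: card_le_Suc0_iff_eq finite_subset)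
  then have "\<not> (C \<inter> S \<noteq> {} \<and> C \<inter> (X - S) \<noteq> {})" for S
    by auto
  then have no_edges:
    "{e\<in>E. C \<inter> edge_split X E phi e \<noteq> {} \<and> C \<inter> (X - edge_split X E phi e) \<noteq> {}} = {}"
    by simp
  show ?thesis
    unfolding delta_def no_edges using True by simp
next
  case False
  have "span_edges E phi C \<subseteq> E"
    unfolding span_edges_def path_edges_def is_path_def adj_def by blast
  then have "span_edges E phi C = {e\<in>E. C \<inter> edge_split X E phi e \<noteq> {} \<and>
                                        C \<inter> (X - edge_split X E phi e) \<noteq> {}}"
    using tree_edge_in_span_edges_iff_edge_split[OF tree leaves _ \<open>C \<subseteq> X\<close>] by auto
  then show ?thesis
    using False by (simp add: delta_def)
qed

lemma edge_split_subset: "edge_split X E phi e \<subseteq> X"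
  by (auto simp: edge_split_def split_side_def)

lemma card_odd_complementary_pair:
  assumes "finite A" "A \<subseteq> X" "even (card A)" "S \<subseteq> X"
  shows "card {B. B \<subseteq> X \<and> odd (card (A \<inter> B)) \<and> (B = S \<or> B = X - S)} = 2 * of_bool (odd (card (A \<inter> S)))"
proof (cases "odd (card (A \<inter> S))")
  case True
  then have "S \<noteq> {}"
    by auto
  then have "S \<noteq> X - S"
    by blast
  moreover have "{B. B \<subseteq> X \<and> odd (card (A \<inter> B)) \<and> (B = S \<or> B = X - S)} = {S, X - S}"
    using True \<open>S \<subseteq> X\<close> odd_card_Int_complement[OF assms(1-3), of S] by auto
  ultimately show ?thesis
    using True by simp
next
  case False
  then have "{B. B \<subseteq> X \<and> odd (card (A \<inter> B)) \<and> (B = S \<or> B = X - S)} = {}"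
    using odd_card_Int_complement[OF assms(1-3), of S] by auto
  then show ?thesis
    using False by simp
qed

lemma mu_eq_sum_odd_edges:
  assumes tree: "is_tree V E" and leaves: "phi ` X \<subseteq> V" and "finite X" "A \<subseteq> X" "even (card A)"
  shows "mu X E phi w A = (\<Sum>e\<in>{e\<in>E. odd (card (A \<inter> edge_split X E phi e))}. w e)"
proof -
  let ?S = "edge_split X E phi"
  let ?O = "{B. B \<subseteq> X \<and> odd (card (A \<inter> B))}"
  have finite_A: "finite A"
    using assms(3,4) by (rule finite_subset[rotated])
  have "finite ?O"
    by (rule finite_subset[of _ "Pow X"]) (use \<open>finite X\<close> in auto)
  have "mu X E phi w A = (\<Sum>B\<in>?O. \<Sum>e\<in>{e. e \<in> E \<and> edge_induces X E phi e B}. w e) / 2"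
    by (simp add: mu_def wtilde_def split_weight_def sum_divide_distrib)
  also have "\<dots> = (\<Sum>e\<in>E. \<Sum>B\<in>{B. B \<in> ?O \<and> edge_induces X E phi e B}. w e) / 2"
    by (rule arg_cong[where f = "\<lambda>x. x / 2"], rule sum.swap_restrict)
      (use \<open>finite ?O\<close> tree_finite_edges[OF tree] in auto)
  also have "\<dots> = (\<Sum>e\<in>E. 2 * (w e * of_bool (odd (card (A \<inter> ?S e))))) / 2"
  proof (rule arg_cong[where f = "\<lambda>x. x / 2"], rule sum.cong[OF refl])
    fix e assume "e \<in> E"
    then have induced: "{B. B \<in> ?O \<and> edge_induces X E phi e B}
        = {B. B \<subseteq> X \<and> odd (card (A \<inter> B)) \<and> (B = ?S e \<or> B = X - ?S e)}"
      using tree_edge_induces_iff[OF tree leaves] by auto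
    show "(\<Sum>B\<in>{B. B \<in> ?O \<and> edge_induces X E phi e B}. w e)
        = 2 * (w e * of_bool (odd (card (A \<inter> ?S e))))"
      unfolding induced sum_constant card_odd_complementary_pair[OF finite_A assms(4,5) edge_split_subset]
      by simp
  qed
  also have "\<dots> = (\<Sum>e\<in>E. w e * of_bool (odd (card (A \<inter> ?S e))))"
    by (simp add: sum_distrib_left[symmetric])
  also have "\<dots> = (\<Sum>e\<in>{e\<in>E. odd (card (A \<inter> ?S e))}. w e)"
    using tree_finite_edges[OF tree] by (simp add: Collect_conj_eq)
  finally show ?thesis .
qed

lemma mu_formula:
  assumes tree: "is_tree V E" and leaves: "phi ` X \<subseteq> V" and "finite X" "A \<subseteq> X" "even (card A)"
  shows "mu X E phi w A = 1/4 * (\<Sum>B\<in>{B. B \<subseteq> A \<and> even (card B)}.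
           2 ^ card B * euler_number (card A - card B) * delta E phi w B)"
proof -
  have finite_A: "finite A"
    using assms(3,4) by (rule finite_subset[rotated])
  have "(\<Sum>B\<in>{B. B \<subseteq> A \<and> even (card B)}. 2 ^ card B * euler_number (card A - card B) * delta E phi w B)
      = (\<Sum>B\<in>{B. B \<subseteq> A \<and> even (card B)}. 2 ^ card B * euler_number (card A - card B) *
          (\<Sum>e\<in>{e\<in>E. B \<inter> edge_split X E phi e \<noteq> {} \<and> B \<inter> (X - edge_split X E phi e) \<noteq> {}}. w e))"
    using delta_eq_sum_splitting_edges[OF tree leaves \<open>finite X\<close>] \<open>A \<subseteq> X\<close> by (intro sum.cong) auto
  then show ?thesis
    using mu_eq_sum_odd_edges[OF assms]
      euler_sum_splitting_weights[OF finite_A assms(4,5) tree_finite_edges[OF tree],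
        where D = "edge_split X E phi" and g = w]
    by simp
qed

theorem theorem6:
  fixes X A :: "'a set"
  assumes "finite X" and "A \<subseteq> X" and "even (card A)"
  shows "(\<forall>p :: 'a set \<Rightarrow> real.
            (\<forall>B. B \<subseteq> X \<longrightarrow> p B \<ge> 0) \<and> (\<Sum>B\<in>Pow X. p B) = 1 \<longrightarrow>
            gamma X p A = 1/4 * (\<Sum>B\<in>{B. B \<subseteq> A \<and> even (card B)}.
                 2 ^ card B * euler_number (card A - card B) * s_nonconst X p B))
       \<and> (\<forall>(V :: 'v set) E (phi :: 'a \<Rightarrow> 'v) (w :: 'v set \<Rightarrow> real).
            phylo_tree X V E phi \<and> (\<forall>e\<in>E. w e \<ge> 0) \<longrightarrow>
            mu X E phi w A = 1/4 * (\<Sum>B\<in>{B. B \<subseteq> A \<and> even (card B)}.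
                 2 ^ card B * euler_number (card A - card B) * delta E phi w B))"
proof (intro conjI allI impI)
  fix p :: "'a set \<Rightarrow> real"
  show "gamma X p A = 1/4 * (\<Sum>B\<in>{B. B \<subseteq> A \<and> even (card B)}.
      2 ^ card B * euler_number (card A - card B) * s_nonconst X p B)"
    by (rule gamma_formula[OF assms])
next
  fix V :: "'v set" and E phi and w :: "'v set \<Rightarrow> real"
  assume "phylo_tree X V E phi \<and> (\<forall>e\<in>E. w e \<ge> 0)"
  then have "is_tree V E" and "phi ` X \<subseteq> V"
    by (auto simp: phylo_tree_def bij_betw_def)
  then show "mu X E phi w A = 1/4 * (\<Sum>B\<in>{B. B \<subseteq> A \<and> even (card B)}.
      2 ^ card B * euler_number (card A - card B) * delta E phi w B)"
    by (rule mu_formula[OF _ _ assms])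
qed
end
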